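(* For any $n,s\in\mathbb{N}$ and every real number $x$, $$\sum_{k=0}^{n-1}\frac{(-1)^k x^{2k}}{(2k+1)^s}=\sum_{k=1}^n(-1)^{k-1}\binom{n}{k}\,{}_{s+1}F_s\left(\{\tfrac12\}^{s},1-k;\{\tfrac32\}^{s};-x^2\right).$$
   Context: $\mathbb{N}$ is the set of positive integers; $\{a\}^s$ denotes $a$ repeated $s$ times. ${}_{s+1}F_s(a_1,\ldots,a_{s+1};b_1,\ldots,b_s;x)=\sum_{i\geq 0}\frac{(a_1)_i\cdots(a_{s+1})_i}{(b_1)_i\cdots(b_s)_i}\frac{x^i}{i!}$, with $(a)_0=1$, $(a)_i=a(a+1)\cdots(a+i-1)$ for $i>0$ (a finite sum here since $1-k\leq 0$ is an integer). *)

theory Defs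
  imports Complex_Main
begin

definition hypergeom :: "real list \<Rightarrow> real list \<Rightarrow> real \<Rightarrow> real" where
  "hypergeom as bs x =
     (\<Sum>i. prod_list (map (\<lambda>a. pochhammer a i) as)
            / prod_list (map (\<lambda>b. pochhammer b i) bs) * x ^ i / fact i)"

end

theory Submission
  imports Defs
begin

text \<open>Since (1/2)_i / (3/2)_i = 1/(2i+1) and (1-k)_i / i! = (-1)^i binom(k-1,i), the
  hypergeometric series is the terminating sum of binom(k-1,i) x^(2i) / (2i+1)^s over i,
  i.e. the (k-1)-th term b_(k-1) of the binomial transform b of a_i = x^(2i) / (2i+1)^s.
  The identity then says that the alternating partial sums of any sequence a are recovered
  from its binomial transform as the sum over j < n of (-1)^j binom(n,j+1) b_j; this follows
  by induction on n from Pascal's rule and binomial inversion.\<close>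

lemma pochhammer_div_pochhammer_plus_one:
  fixes a :: real
  assumes "a > 0"
  shows "pochhammer a i / pochhammer (a + 1) i = a / (a + of_nat i)"
proof -
  have "a * pochhammer (a + 1) i = (a + of_nat i) * pochhammer a i"
    by (metis pochhammer_rec pochhammer_rec')
  moreover have "pochhammer (a + 1) i \<noteq> 0" and "a + of_nat i \<noteq> 0"
    using assms by (auto simp: pochhammer_eq_0_iff)
  ultimately show ?thesis
    by (simp add: field_simps)
qed

lemma pochhammer_minus_of_nat_div_fact:
  "pochhammer (- of_nat m :: 'a :: field_char_0) i / fact i = (-1) ^ i * of_nat (m choose i)"
  by (simp add: gbinomial_pochhammer binomial_gbinomial)

definition binomial_transform :: "(nat \<Rightarrow> 'a :: comm_ring_1) \<Rightarrow> nat \<Rightarrow> 'a" where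
  "binomial_transform a j = (\<Sum>i\<le>j. of_nat (j choose i) * a i)"

lemma binomial_transform_Suc:
  "binomial_transform a (Suc j) = binomial_transform a j + binomial_transform (\<lambda>i. a (Suc i)) j"
proof -
  have "binomial_transform a (Suc j)
      = a 0 + (\<Sum>i\<le>j. of_nat (j choose Suc i) * a (Suc i)) + binomial_transform (\<lambda>i. a (Suc i)) j"
    unfolding binomial_transform_def
    by (subst sum.atMost_Suc_shift) (simp add: sum.distrib algebra_simps)
  also have "a 0 + (\<Sum>i\<le>j. of_nat (j choose Suc i) * a (Suc i)) = binomial_transform a j"
  proof -
    have "binomial_transform a j = (\<Sum>i\<le>Suc j. of_nat (j choose i) * a i)"
      by (simp add: binomial_transform_def binomial_eq_0)
    also have "\<dots> = a 0 + (\<Sum>i\<le>j. of_nat (j choose Suc i) * a (Suc i))"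
      by (subst sum.atMost_Suc_shift) simp
    finally show ?thesis ..
  qed
  finally show ?thesis .
qed

lemma alternating_sum_choose_Suc:
  "(\<Sum>j\<le>Suc n. (-1) ^ j * of_nat (Suc n choose j) * b j)
   = (\<Sum>j\<le>Suc n. (-1) ^ j * of_nat (n choose j) * b j)
     - (\<Sum>j\<le>n. (-1) ^ j * of_nat (n choose j) * (b (Suc j) :: 'a :: comm_ring_1))"
  by (simp only: sum.atMost_Suc_shift) (simp add: sum.distrib sum_subtractf sum_negf algebra_simps)

lemma binomial_transform_inversion:
  "(\<Sum>j\<le>n. (-1) ^ j * of_nat (n choose j) * binomial_transform a j) = (-1) ^ n * a n"
proof (induction n arbitrary: a)
  case 0
  then show ?case by (simp add: binomial_transform_def)
next
  case (Suc n)
  let ?S = "\<lambda>a. \<Sum>j\<le>n. (-1) ^ j * of_nat (n choose j) * binomial_transform a j"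
  have "(\<Sum>j\<le>Suc n. (-1) ^ j * of_nat (Suc n choose j) * binomial_transform a j)
      = ?S a - (\<Sum>j\<le>n. (-1) ^ j * of_nat (n choose j) * binomial_transform a (Suc j))"
    by (subst alternating_sum_choose_Suc) (simp add: binomial_eq_0)
  also have "\<dots> = ?S a - (?S a + ?S (\<lambda>i. a (Suc i)))"
    by (simp add: binomial_transform_Suc sum.distrib algebra_simps)
  finally show ?case
    using Suc.IH[of "\<lambda>i. a (Suc i)"] by simp
qed

lemma alternating_sum_eq_binomial_transform_sum:
  "(\<Sum>j<n. (-1) ^ j * of_nat (n choose Suc j) * binomial_transform a j) = (\<Sum>i<n. (-1) ^ i * a i)"
proof (induction n)
  case 0
  then show ?case by simp
next
  case (Suc n)
  have "(\<Sum>j<Suc n. (-1) ^ j * of_nat (Suc n choose Suc j) * binomial_transform a j)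
      = (\<Sum>j\<le>n. (-1) ^ j * of_nat (n choose j) * binomial_transform a j)
        + (\<Sum>j<Suc n. (-1) ^ j * of_nat (n choose Suc j) * binomial_transform a j)"
    by (simp add: sum.distrib algebra_simps lessThan_Suc_atMost)
  also have "\<dots> = (-1) ^ n * a n + (\<Sum>i<n. (-1) ^ i * a i)"
    by (simp add: binomial_transform_inversion binomial_eq_0 Suc.IH)
  finally show ?case
    by simp
qed

lemma hypergeom_half_three_halves_eq_binomial_transform:
  assumes "k \<ge> 1"
  shows "hypergeom (replicate s (1/2) @ [1 - real k]) (replicate s (3/2)) (- (x ^ 2))
       = binomial_transform (\<lambda>i. x ^ (2 * i) / (2 * real i + 1) ^ s) (k - 1)"
proof -
  have half: "pochhammer (1/2 :: real) i / pochhammer (3/2) i = 1 / (2 * real i + 1)" for i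
    using pochhammer_div_pochhammer_plus_one[of "1/2" i] by (simp add: field_simps)
  have one_minus_k: "1 - real k = - real (k - 1)"
    using assms by (simp add: of_nat_diff)
  have series_term: "prod_list (map (\<lambda>a. pochhammer a i) (replicate s (1/2) @ [1 - real k]))
        / prod_list (map (\<lambda>b. pochhammer b i) (replicate s (3/2))) * (- (x ^ 2)) ^ i / fact i
      = real (k - 1 choose i) * (x ^ (2 * i) / (2 * real i + 1) ^ s)" for i
  proof -
    have "prod_list (map (\<lambda>a. pochhammer a i) (replicate s (1/2) @ [1 - real k]))
        / prod_list (map (\<lambda>b. pochhammer b i) (replicate s (3/2))) * (- (x ^ 2)) ^ i / fact i
      = (pochhammer (1/2) i / pochhammer (3/2) i) ^ s
        * (pochhammer (- real (k - 1)) i / fact i) * (- (x ^ 2)) ^ i"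
      by (simp add: one_minus_k power_divide)
    also have "\<dots> = real (k - 1 choose i) * ((-1) ^ i * (- (x ^ 2)) ^ i / (2 * real i + 1) ^ s)"
      by (simp add: half pochhammer_minus_of_nat_div_fact power_divide)
    also have "(-1) ^ i * (- (x ^ 2)) ^ i = x ^ (2 * i)"
      by (simp add: power_mult flip: power_mult_distrib)
    finally show ?thesis .
  qed
  have "hypergeom (replicate s (1/2) @ [1 - real k]) (replicate s (3/2)) (- (x ^ 2))
      = (\<Sum>i. real (k - 1 choose i) * (x ^ (2 * i) / (2 * real i + 1) ^ s))"
    unfolding hypergeom_def series_term ..
  also have "\<dots> = (\<Sum>i\<le>k - 1. real (k - 1 choose i) * (x ^ (2 * i) / (2 * real i + 1) ^ s))"
    by (rule suminf_finite) auto
  finally show ?thesis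
    by (simp add: binomial_transform_def)
qed

theorem lemma3p3:
  fixes n s :: nat and x :: real
  assumes "n \<ge> 1" and "s \<ge> 1"
  shows "(\<Sum>k<n. (-1) ^ k * x ^ (2 * k) / (2 * real k + 1) ^ s) =
         (\<Sum>k = 1..n. (-1) ^ (k - 1) * real (n choose k) *
            hypergeom (replicate s (1/2) @ [1 - real k]) (replicate s (3/2)) (- (x ^ 2)))"
proof -
  \<comment> \<open>The identity also holds for n = 0 and s = 0.\<close>
  define a where "a = (\<lambda>i. x ^ (2 * i) / (2 * real i + 1) ^ s)"
  have "(\<Sum>k = 1..n. (-1) ^ (k - 1) * real (n choose k) *
            hypergeom (replicate s (1/2) @ [1 - real k]) (replicate s (3/2)) (- (x ^ 2)))
      = (\<Sum>k = Suc 0..n. (-1) ^ (k - 1) * real (n choose k) * binomial_transform a (k - 1))"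
    by (intro sum.cong) (simp_all add: hypergeom_half_three_halves_eq_binomial_transform a_def)
  also have "\<dots> = (\<Sum>j<n. (-1) ^ j * real (n choose Suc j) * binomial_transform a j)"
    by (subst sum.atLeast1_atMost_eq) simp
  also have "\<dots> = (\<Sum>i<n. (-1) ^ i * a i)"
    by (rule alternating_sum_eq_binomial_transform_sum)
  finally show ?thesis
    by (simp add: a_def)
qed

end
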